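(* Let $0<p<1$, $q=1-p$, $N\ge1$, let $\sigma=(\sigma_1,\dots,\sigma_N)\in S_N$, let $\mathbf{x}=(x_1,\dots,x_N)$ and $\mathbf{y}=(y_1,\dots,y_N)$ be integer vectors with $x_1>x_2>\dots>x_N$ and $y_1>y_2>\dots>y_N$, let $t\in\mathbb{Z}$, and let $$\mathcal{F}_\sigma=\prod_{i=1}^N F_{\sigma_i-i}(x_i-y_{\sigma_i},t).$$ (1) If $t=0$, then $\mathcal{F}_\sigma=0$ unless $\sigma$ is the identity permutation and $\mathbf{x}=\mathbf{y}$. (2) Let $t=1$ and let $(i_1,\dots,i_k)$ be a cycle of $\sigma$ with $k>1$ elements, i.e. $\sigma_{i_1}=i_2,\sigma_{i_2}=i_3,\dots,\sigma_{i_k}=i_1$. Then $\mathcal{F}_\sigma=0$ unless, up to a cyclic shift of the indices of the cycle, $i_2=i_1+1,\dots,i_k=i_1+k-1$ and $y_{i_1}=x_{i_1}$, $x_{i_2}=y_{i_2}=x_{i_1}-1,\dots,x_{i_k}=y_{i_k}=x_{i_1}-k+1$.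
   Context: For $n,x\in\mathbb{Z}$: $F_n(x,t)=\frac{1}{2\pi i}\oint_{\Gamma_0}\frac{dw}{w}\left(q+\frac{p}{w}\right)^t(1-w)^{-n}w^x$ for $t\ge0$, and $F_n(x,t)=0$ for $t<0$, where $\Gamma_0$ is a positively oriented contour encircling the origin and leaving $w=1$ outside. *)

theory Defs
  imports "HOL-Complex_Analysis.Complex_Analysis"
begin

text \<open>The kernel F_n(x,t) with parameter p (q = 1 - p). The contour Gamma_0 is taken
to be the circle of radius 1/2 around 0, which encircles the origin and leaves w = 1 outside.\<close>
definition F :: "real \<Rightarrow> int \<Rightarrow> int \<Rightarrow> int \<Rightarrow> complex" where
  "F p n x t =
     (if t < 0 then 0
      else contour_integral (circlepath 0 (1/2))
             (\<lambda>w. (1 / w) * (complex_of_real (1 - p) + complex_of_real p / w) ^ nat t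
                   * (1 - w) powi (- n) * w powi x) / (2 * of_real pi * \<i>))"

end

theory Submission
  imports Defs
begin

text \<open>
  Expanding (q + p/w)^t binomially writes the integrand of F_n(x,t) as a combination of the
  functions w^(x-1-j) (1-w)^(-n), 0 \<le> j \<le> t. Each of them is holomorphic in the unit disc
  when x > t, and for n \<le> 0 and x < n it is a Laurent polynomial without a 1/w term. Hence,
  for every real p, F_n(x,t) \<noteq> 0 forces x \<le> t and, if n \<le> 0, also n \<le> x.

  For a nonvanishing product this bounds each gap x_i - y_\<sigma>(i) above by t and, at descents of
  \<sigma>, below by the displacement \<sigma>(i) - i. As x_i + i and y_j + j are non-increasing, the lower
  bound carries over from descents to ascents: an ascent i \<mapsto> \<sigma>(i) is jumped over by some
  descent l \<mapsto> \<sigma>(l) with \<sigma>(l) < \<sigma>(i) \<le> l. For t = 0 all displacements are then \<le> 0, so \<sigma>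
  is the identity. For t = 1 every ascent is a unit step with gap 1, so a cycle read from its
  least element climbs by unit steps and falls back once, and the monotonicity inequalities
  along the cycle all become equalities.
\<close>

lemma has_contour_integral_powi_eq_0:
  fixes e :: int
  assumes "e \<noteq> -1" "valid_path g" "pathfinish g = pathstart g" "0 \<notin> path_image g"
  shows "((\<lambda>w::complex. w powi e) has_contour_integral 0) g"
proof (rule Cauchy_theorem_primitive[where S="-{0}" and f="\<lambda>w. w powi (e+1) / of_int (e+1)"])
  fix w :: complex assume "w \<in> - {0}"
  have "((\<lambda>w. w powi (e+1) / of_int (e+1)) has_field_derivative
        of_int (e+1) * w powi e / of_int (e+1)) (at w within -{0})"
    using \<open>w \<in> - {0}\<close> by (auto intro!: derivative_eq_intros)
  moreover have "(of_int (e+1) :: complex) \<noteq> 0"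
    using assms(1) by (simp only: of_int_eq_0_iff)
  ultimately show "((\<lambda>w. w powi (e+1) / of_int (e+1)) has_field_derivative w powi e) (at w within -{0})"
    by simp
qed (use assms in auto)

lemma has_contour_integral_powi_times_poly_eq_0:
  fixes k n :: int
  assumes "n \<le> 0" "k < n - 1" "valid_path g" "pathfinish g = pathstart g" "0 \<notin> path_image g"
  shows "((\<lambda>w::complex. w powi k * (1-w) powi (-n)) has_contour_integral 0) g"
proof -
  define r where "r = nat (-n)"
  let ?c = "\<lambda>j. of_nat (r choose j) * (-1)^j :: complex"
  have "((\<lambda>w. \<Sum>j\<le>r. ?c j * w powi (k + int j)) has_contour_integral (\<Sum>j\<le>r. ?c j * 0)) g"
    using assms unfolding r_def
    by (intro has_contour_integral_sum has_contour_integral_lmul has_contour_integral_powi_eq_0) auto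
  then have "((\<lambda>w. \<Sum>j\<le>r. ?c j * w powi (k + int j)) has_contour_integral 0) g"
    by simp
  then show ?thesis
  proof (rule has_contour_integral_eq)
    fix w :: complex assume "w \<in> path_image g"
    with assms have "w \<noteq> 0" by auto
    have "(1-w) powi (-n) = (\<Sum>j\<le>r. of_nat (r choose j) * (-w)^j)"
      using assms(1) binomial_ring[of "-w" 1 r] by (simp add: power_int_def r_def)
    then show "(\<Sum>j\<le>r. ?c j * w powi (k + int j)) = w powi k * (1-w) powi (-n)"
      using \<open>w \<noteq> 0\<close> by (simp add: sum_distrib_left power_int_add power_minus[of w] mult_ac)
  qed
qed

lemma has_contour_integral_nonneg_powi_eq_0:
  fixes k n :: int
  assumes "k \<ge> 0" "valid_path g" "pathfinish g = pathstart g" "path_image g \<subseteq> ball 0 1"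
  shows "((\<lambda>w::complex. w powi k * (1-w) powi (-n)) has_contour_integral 0) g"
proof (rule Cauchy_theorem_disc_simple[OF _ assms(2,4,3)])
  have "1 - w \<noteq> 0" if "w \<in> ball (0::complex) 1" for w
    using that by auto
  then show "(\<lambda>w::complex. w powi k * (1-w) powi (-n)) holomorphic_on ball 0 1"
    using assms(1) by (intro holomorphic_intros) auto
qed

lemma F_integrand_binomial_expansion:
  fixes w :: complex
  assumes "w \<noteq> 0"
  shows "(1 / w) * (complex_of_real (1 - p) + complex_of_real p / w) ^ t * (1 - w) powi (- n) * w powi x
    = (\<Sum>j\<le>t. of_nat (t choose j) * of_real p ^ j * of_real (1 - p) ^ (t - j)
               * (w powi (x - 1 - int j) * (1 - w) powi (- n)))"
proof -
  have binom: "(complex_of_real (1 - p) + complex_of_real p / w) ^ t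
      = (\<Sum>j\<le>t. of_nat (t choose j) * (of_real p / w) ^ j * of_real (1 - p) ^ (t - j))"
    using binomial_ring[of "complex_of_real p / w" _ t] by (simp add: add.commute)
  show ?thesis
    unfolding binom sum_distrib_left sum_distrib_right
  proof (intro sum.cong refl)
    fix j
    have "w powi x = w powi (x - 1 - int j) * w ^ Suc j"
      using power_int_add[of w "x - 1 - int j" "int (Suc j)"] assms by (simp add: power_int_add)
    then show "1 / w * (of_nat (t choose j) * (of_real p / w) ^ j * of_real (1 - p) ^ (t - j))
        * (1 - w) powi - n * w powi x = of_nat (t choose j) * of_real p ^ j * of_real (1 - p) ^ (t - j)
        * (w powi (x - 1 - int j) * (1 - w) powi - n)"
      using assms by (simp add: power_divide field_simps)
  qed
qed

lemma F_eq_0: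
  assumes "0 \<le> t" "t < x \<or> (n \<le> 0 \<and> x < n)"
  shows "F p n x t = 0"
proof -
  let ?g = "circlepath (0::complex) (1/2)"
  let ?c = "\<lambda>j. of_nat (nat t choose j) * of_real p ^ j * of_real (1 - p) ^ (nat t - j) :: complex"
  have g: "valid_path ?g" "pathfinish ?g = pathstart ?g" "0 \<notin> path_image ?g" "path_image ?g \<subseteq> ball 0 1"
    by auto
  have summand: "((\<lambda>w. w powi (x - 1 - int j) * (1 - w) powi (- n)) has_contour_integral 0) ?g"
    if "j \<le> nat t" for j
  proof (cases "t < x")
    case True
    then show ?thesis
      using assms(1) that by (intro has_contour_integral_nonneg_powi_eq_0 g) linarith
  next
    case False
    then show ?thesis
      using assms that by (intro has_contour_integral_powi_times_poly_eq_0 g) auto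
  qed
  have "((\<lambda>w. \<Sum>j\<le>nat t. ?c j * (w powi (x - 1 - int j) * (1 - w) powi (- n)))
          has_contour_integral (\<Sum>j\<le>nat t. ?c j * 0)) ?g"
    using summand by (intro has_contour_integral_sum has_contour_integral_lmul) auto
  then have "((\<lambda>w. \<Sum>j\<le>nat t. ?c j * (w powi (x - 1 - int j) * (1 - w) powi (- n)))
          has_contour_integral 0) ?g"
    by (simp only: mult_zero_right sum.neutral_const)
  then have "((\<lambda>w. (1 / w) * (complex_of_real (1 - p) + complex_of_real p / w) ^ nat t
                   * (1 - w) powi (- n) * w powi x) has_contour_integral 0) ?g"
  proof (rule has_contour_integral_eq[OF _ sym])
    fix w assume "w \<in> path_image ?g"
    with g(3) have "w \<noteq> 0" by blast
    then show "(1 / w) * (complex_of_real (1 - p) + complex_of_real p / w) ^ nat t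
                   * (1 - w) powi (- n) * w powi x
        = (\<Sum>j\<le>nat t. ?c j * (w powi (x - 1 - int j) * (1 - w) powi (- n)))"
      by (rule F_integrand_binomial_expansion)
  qed
  then show ?thesis
    using assms(1) by (simp add: F_def contour_integral_unique)
qed

lemma strict_decreasing_plus_index_antimono:
  fixes x :: "nat \<Rightarrow> int"
  assumes dec: "\<And>i j. 1 \<le> i \<Longrightarrow> i < j \<Longrightarrow> j \<le> N \<Longrightarrow> x i > x j"
    and "1 \<le> i" "i \<le> j" "j \<le> N"
  shows "x j + int j \<le> x i + int i"
  using assms(3,4)
proof (induction j rule: dec_induct)
  case (step j)
  then have "x (Suc j) < x j"
    using dec[of j "Suc j"] assms(2) by auto
  with step show ?case by simp
qed simp

lemma permutes_ascent_imp_crossing_descent: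
  fixes \<sigma> :: "'a::linorder \<Rightarrow> 'a"
  assumes perm: "\<sigma> permutes S" and "finite S" "i \<in> S" "i < \<sigma> i"
  shows "\<exists>l\<in>S. \<sigma> i \<le> l \<and> \<sigma> l < \<sigma> i"
proof (rule ccontr)
  define T where "T = {l \<in> S. \<sigma> i \<le> l}"
  assume "\<not> ?thesis"
  then have "\<sigma> ` T \<subseteq> T"
    unfolding T_def using permutes_in_image[OF perm] by force
  moreover have "finite T"
    unfolding T_def using \<open>finite S\<close> by simp
  moreover have "inj_on \<sigma> T"
    using permutes_inj[OF perm] by (rule inj_on_subset) simp
  ultimately have "\<sigma> ` T = T"
    by (intro endo_inj_surj)
  moreover have "\<sigma> i \<in> T"
    unfolding T_def using assms(3) permutes_in_image[OF perm] by simp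
  ultimately obtain l where "l \<in> T" "\<sigma> l = \<sigma> i"
    by (metis imageE)
  then have "i \<in> T"
    using permutes_inj[OF perm] by (simp add: inj_eq)
  with \<open>i < \<sigma> i\<close> show False
    unfolding T_def using leD by blast
qed

lemma permutes_le_imp_id:
  fixes \<sigma> :: "nat \<Rightarrow> nat"
  assumes perm: "\<sigma> permutes S" and "finite S" and le: "\<And>i. i \<in> S \<Longrightarrow> \<sigma> i \<le> i"
  shows "\<sigma> = id"
proof -
  have "\<sigma> i = i" if "i \<in> S" for i
  proof (rule ccontr)
    assume "\<sigma> i \<noteq> i"
    with le that have "sum \<sigma> S < sum id S"
      by (intro sum_strict_mono_ex1 \<open>finite S\<close>) (auto intro: order.not_eq_order_implies_strict)
    moreover have "sum id S = sum (id \<circ> \<sigma>) S"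
      by (rule sum.permute[OF perm])
    ultimately show False
      by simp
  qed
  then show ?thesis
    using permutes_not_in[OF perm] by (auto simp: fun_eq_iff)
qed

lemma permutes_displacement_le_gap:
  fixes \<sigma> :: "nat \<Rightarrow> nat" and x y :: "nat \<Rightarrow> int"
  assumes perm: "\<sigma> permutes {1..N}"
    and hx: "\<And>i j. 1 \<le> i \<Longrightarrow> i < j \<Longrightarrow> j \<le> N \<Longrightarrow> x i > x j"
    and hy: "\<And>i j. 1 \<le> i \<Longrightarrow> i < j \<Longrightarrow> j \<le> N \<Longrightarrow> y i > y j"
    and descent: "\<And>i. i \<in> {1..N} \<Longrightarrow> \<sigma> i \<le> i \<Longrightarrow> int (\<sigma> i) - int i \<le> x i - y (\<sigma> i)"
    and i: "i \<in> {1..N}"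
  shows "int (\<sigma> i) - int i \<le> x i - y (\<sigma> i)"
proof (cases "i < \<sigma> i")
  case True
  then obtain l where l: "l \<in> {1..N}" "\<sigma> i \<le> l" "\<sigma> l < \<sigma> i"
    using permutes_ascent_imp_crossing_descent[OF perm _ i] by auto
  have "\<sigma> i \<in> {1..N}" "\<sigma> l \<in> {1..N}"
    using permutes_in_image[OF perm] i l(1) by auto
  then have "x l + int l \<le> x i + int i" "y (\<sigma> i) + int (\<sigma> i) \<le> y (\<sigma> l) + int (\<sigma> l)"
    using True l i
    by (auto intro!: strict_decreasing_plus_index_antimono[of N] hx hy)
  moreover have "int (\<sigma> l) - int l \<le> x l - y (\<sigma> l)"
    using descent l by simp
  ultimately show ?thesis
    by linarith
qed (use descent i in simp)

lemma funpow_periodic_min_iterate: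
  fixes f :: "'a::linorder \<Rightarrow> 'a"
  assumes "(f ^^ k) i = i" "0 < k"
  obtains s where "s < k" "\<And>j. (f ^^ s) i \<le> (f ^^ j) ((f ^^ s) i)"
proof -
  define Orb where "Orb = (\<lambda>j. (f ^^ j) i) ` {..<k}"
  have orbit: "(f ^^ j) i \<in> Orb" for j
  proof -
    have "(f ^^ j) i = (f ^^ (j mod k)) i"
      using funpow_mod_eq[OF assms(1)] by simp
    then show ?thesis
      unfolding Orb_def using assms(2) by (intro image_eqI[of _ _ "j mod k"]) auto
  qed
  have "finite Orb" "Orb \<noteq> {}"
    unfolding Orb_def using assms(2) by auto
  then have "Min Orb \<in> Orb"
    by (rule Min_in)
  then obtain s where "s < k" "(f ^^ s) i = Min Orb"
    unfolding Orb_def by auto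
  moreover have "Min Orb \<le> (f ^^ j) ((f ^^ s) i)" for j
    using \<open>finite Orb\<close> orbit[of "j + s"] by (simp add: funpow_add)
  ultimately show ?thesis
    using that by simp
qed

lemma funpow_exact_period_iterate:
  assumes "inj f" "(f ^^ k) i = i" "\<And>d. d \<in> {1..<k} \<Longrightarrow> (f ^^ d) i \<noteq> i"
  shows "(f ^^ k) ((f ^^ s) i) = (f ^^ s) i"
    and "\<And>d. d \<in> {1..<k} \<Longrightarrow> (f ^^ d) ((f ^^ s) i) \<noteq> (f ^^ s) i"
proof -
  have commute: "(f ^^ d) ((f ^^ s) i) = (f ^^ s) ((f ^^ d) i)" for d
    by (metis add.commute comp_apply funpow_add)
  show "(f ^^ k) ((f ^^ s) i) = (f ^^ s) i"
    using commute assms(2) by simp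
  show "(f ^^ d) ((f ^^ s) i) \<noteq> (f ^^ s) i" if "d \<in> {1..<k}" for d
    using commute[of d] assms(3)[OF that] inj_fn[OF assms(1), of s] by (simp add: inj_eq)
qed

lemma funpow_unit_ascents_from_min:
  fixes f :: "nat \<Rightarrow> nat"
  assumes "inj f"
    and exact: "\<And>d. d \<in> {1..<k} \<Longrightarrow> (f ^^ d) a \<noteq> a"
    and min: "\<And>j. a \<le> (f ^^ j) a"
    and unit: "\<And>z. z < f z \<Longrightarrow> f z = Suc z"
    and "j < k"
  shows "(f ^^ j) a = a + j"
proof -
  have "\<forall>m\<le>j. (f ^^ m) a = a + m"
    using \<open>j < k\<close>
  proof (induction j)
    case (Suc j)
    then have IH: "\<forall>m\<le>j. (f ^^ m) a = a + m"
      by simp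
    then have step: "(f ^^ Suc j) a = f (a + j)"
      by simp
    have "f (a + j) = Suc (a + j)"
    proof (rule ccontr)
      assume "f (a + j) \<noteq> Suc (a + j)"
      then have "f (a + j) \<le> a + j"
        using unit[of "a + j"] leI by blast
      moreover have "a \<le> f (a + j)"
        using min[of "Suc j"] step by simp
      ultimately obtain m where m: "m \<le> j" "f (a + j) = a + m"
        by (metis add_le_cancel_left le_add_diff_inverse)
      have "(f ^^ m) ((f ^^ (Suc j - m)) a) = (f ^^ (m + (Suc j - m))) a"
        by (simp add: funpow_add)
      also have "\<dots> = (f ^^ m) a"
        using IH step m by simp
      finally have "(f ^^ m) ((f ^^ (Suc j - m)) a) = (f ^^ m) a" .
      then have "(f ^^ (Suc j - m)) a = a"
        using inj_fn[OF \<open>inj f\<close>] by (simp add: inj_eq)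
      moreover have "Suc j - m \<in> {1..<k}"
        using m(1) Suc.prems by auto
      ultimately show False
        using exact by blast
    qed
    with IH step show ?case
      by (auto simp: le_Suc_eq)
  qed simp
  then show ?thesis
    by simp
qed

lemma unit_step_cycle_values:
  fixes x y :: "nat \<Rightarrow> int"
  assumes hx: "\<And>i j. 1 \<le> i \<Longrightarrow> i < j \<Longrightarrow> j \<le> N \<Longrightarrow> x i > x j"
    and hy: "\<And>i j. 1 \<le> i \<Longrightarrow> i < j \<Longrightarrow> j \<le> N \<Longrightarrow> y i > y j"
    and block: "1 \<le> a" "a + (k - 1) \<le> N" "1 < k"
    and step: "\<And>j. j \<in> {1..<k} \<Longrightarrow> y (a + j) = x (a + j - 1) - 1"
    and close: "y a \<le> x (a + (k - 1)) + int (k - 1)"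
  shows "y a = x a"
    and "\<And>j. j < k \<Longrightarrow> x (a + j) = x a - int j"
    and "\<And>j. j \<in> {1..<k} \<Longrightarrow> y (a + j) = x a - int j"
proof -
  have ux: "x (a + j') + int (a + j') \<le> x (a + j) + int (a + j)" if "j \<le> j'" "j' < k" for j j'
    using that block by (intro strict_decreasing_plus_index_antimono[of N] hx) auto
  have "y (a + 1) < y a"
    using block by (intro hy) auto
  then have "x a \<le> y a"
    using step[of 1] block(3) by simp
  moreover have "y a \<le> x a"
    using close ux[of 0 "k - 1"] block(3) by simp
  ultimately show ya: "y a = x a"
    by simp
  show xj: "x (a + j) = x a - int j" if "j < k" for j
  proof -
    have "j \<le> k - 1"
      using that by simp
    then show ?thesis
      using ux[OF _ that, of 0] ux[of j "k - 1"] block(3) close ya by simp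
  qed
  show "y (a + j) = x a - int j" if "j \<in> {1..<k}" for j
  proof -
    have "j - 1 < k"
      using that by auto
    then show ?thesis
      using step[OF that] xj[of "j - 1"] that by (simp add: of_nat_diff)
  qed
qed

lemma F_prod_nonzero_imp_gap_bounds:
  fixes \<sigma> :: "nat \<Rightarrow> nat" and x y :: "nat \<Rightarrow> int"
  assumes perm: "\<sigma> permutes {1..N}"
    and hx: "\<And>i j. 1 \<le> i \<Longrightarrow> i < j \<Longrightarrow> j \<le> N \<Longrightarrow> x i > x j"
    and hy: "\<And>i j. 1 \<le> i \<Longrightarrow> i < j \<Longrightarrow> j \<le> N \<Longrightarrow> y i > y j"
    and "0 \<le> t"
    and nonzero: "(\<Prod>i=1..N. F p (int (\<sigma> i) - int i) (x i - y (\<sigma> i)) t) \<noteq> 0"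
    and i: "i \<in> {1..N}"
  shows "int (\<sigma> i) - int i \<le> x i - y (\<sigma> i)" and "x i - y (\<sigma> i) \<le> t"
proof -
  have factor: "t \<ge> x i - y (\<sigma> i) \<and> (\<sigma> i \<le> i \<longrightarrow> int (\<sigma> i) - int i \<le> x i - y (\<sigma> i))"
    if "i \<in> {1..N}" for i
  proof -
    have "F p (int (\<sigma> i) - int i) (x i - y (\<sigma> i)) t \<noteq> 0"
      using nonzero that by simp
    then have "\<not> (t < x i - y (\<sigma> i)
                  \<or> (int (\<sigma> i) - int i \<le> 0 \<and> x i - y (\<sigma> i) < int (\<sigma> i) - int i))"
      using F_eq_0[OF \<open>0 \<le> t\<close>] by blast
    then show ?thesis
      by auto
  qed
  then show "x i - y (\<sigma> i) \<le> t"
    using i by blast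
  show "int (\<sigma> i) - int i \<le> x i - y (\<sigma> i)"
    by (rule permutes_displacement_le_gap[OF perm hx hy _ i]) (use factor in auto)
qed

lemma unit_gap_cycle_shape:
  fixes \<sigma> :: "nat \<Rightarrow> nat" and x y :: "nat \<Rightarrow> int"
  assumes perm: "\<sigma> permutes {1..N}"
    and hx: "\<And>i j. 1 \<le> i \<Longrightarrow> i < j \<Longrightarrow> j \<le> N \<Longrightarrow> x i > x j"
    and hy: "\<And>i j. 1 \<le> i \<Longrightarrow> i < j \<Longrightarrow> j \<le> N \<Longrightarrow> y i > y j"
    and bounds: "\<And>i. i \<in> {1..N} \<Longrightarrow> int (\<sigma> i) - int i \<le> x i - y (\<sigma> i) \<and> x i - y (\<sigma> i) \<le> 1"
    and cycle: "i1 \<in> {1..N}" "1 < k" "(\<sigma> ^^ k) i1 = i1" "\<And>j. j \<in> {1..<k} \<Longrightarrow> (\<sigma> ^^ j) i1 \<noteq> i1"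
  shows "\<exists>s<k. let a = (\<sigma> ^^ s) i1 in
           (\<forall>j<k. (\<sigma> ^^ j) a = a + j)
           \<and> y a = x a
           \<and> (\<forall>j\<in>{1..<k}. x (a + j) = x a - int j \<and> y (a + j) = x a - int j)"
proof -
  have "inj \<sigma>"
    by (rule permutes_inj[OF perm])
  have orbit: "(\<sigma> ^^ j) z \<in> {1..N}" if "z \<in> {1..N}" for j z
  proof (induction j)
    case (Suc j)
    then show ?case
      by (simp only: funpow.simps comp_apply permutes_in_image[OF perm])
  qed (use that in simp)
  have unit: "\<sigma> z = Suc z" if "z < \<sigma> z" for z
  proof -
    have "z \<in> {1..N}"
      using that permutes_not_in[OF perm] by fastforce
    then show ?thesis
      using bounds[of z] that by simp
  qed
  obtain s where "s < k" and min: "\<And>j. (\<sigma> ^^ s) i1 \<le> (\<sigma> ^^ j) ((\<sigma> ^^ s) i1)"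
    using funpow_periodic_min_iterate[OF cycle(3)] cycle(2) by auto
  define a where "a = (\<sigma> ^^ s) i1"
  note period = funpow_exact_period_iterate[OF \<open>inj \<sigma>\<close> cycle(3,4), where s=s, folded a_def]
  have shape: "(\<sigma> ^^ j) a = a + j" if "j < k" for j
    using funpow_unit_ascents_from_min[OF \<open>inj \<sigma>\<close> period(2) min[folded a_def] unit that] .
  have block: "a + j \<in> {1..N}" if "j < k" for j
    using orbit[OF cycle(1), of "j + s"] shape[OF that] by (simp add: a_def funpow_add)
  have step: "y (a + j) = x (a + j - 1) - 1" if j: "j \<in> {1..<k}" for j
  proof -
    obtain m where m: "j = Suc m" "m < k"
      using j by (cases j) auto
    have "\<sigma> (a + m) = (\<sigma> ^^ Suc m) a"
      using shape[OF m(2)] by simp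
    also have "\<dots> = a + j"
      using shape[of j] j m(1) by simp
    finally show ?thesis
      using bounds[of "a + m"] block[OF m(2)] m(1) by simp
  qed
  have close: "y a \<le> x (a + (k - 1)) + int (k - 1)"
  proof -
    obtain m where m: "k = Suc m"
      using cycle(2) by (cases k) auto
    have "\<sigma> (a + m) = (\<sigma> ^^ Suc m) a"
      using shape[of m] m by simp
    also have "\<dots> = a"
      using period(1) m by simp
    finally show ?thesis
      using bounds[of "a + m"] block[of m] m by simp
  qed
  have "1 \<le> a" "a + (k - 1) \<le> N"
    using block[of 0] block[of "k - 1"] cycle(2) by auto
  note cycle_values = unit_step_cycle_values[OF hx hy this cycle(2) step close]
  show ?thesis
    unfolding Let_def using \<open>s < k\<close> shape cycle_values by (auto simp: a_def intro!: exI[of _ s])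
qed

theorem lemma4:
  fixes p :: real and N :: nat and \<sigma> :: "nat \<Rightarrow> nat" and x y :: "nat \<Rightarrow> int" and t :: int
  assumes hp: "0 < p" "p < 1"
    and hN: "N \<ge> 1"
    and h\<sigma>: "\<sigma> permutes {1..N}"
    and hx: "\<And>i j. 1 \<le> i \<Longrightarrow> i < j \<Longrightarrow> j \<le> N \<Longrightarrow> x i > x j"
    and hy: "\<And>i j. 1 \<le> i \<Longrightarrow> i < j \<Longrightarrow> j \<le> N \<Longrightarrow> y i > y j"
  shows
    "(t = 0 \<longrightarrow>
        (\<Prod>i=1..N. F p (int (\<sigma> i) - int i) (x i - y (\<sigma> i)) t) \<noteq> 0 \<longrightarrow>
        (\<forall>i\<in>{1..N}. \<sigma> i = i) \<and> (\<forall>i\<in>{1..N}. x i = y i))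
     \<and>
     (t = 1 \<longrightarrow>
        (\<forall>i1 k. i1 \<in> {1..N} \<and> k > 1 \<and> (\<sigma> ^^ k) i1 = i1
                 \<and> (\<forall>j\<in>{1..<k}. (\<sigma> ^^ j) i1 \<noteq> i1) \<longrightarrow>
          (\<Prod>i=1..N. F p (int (\<sigma> i) - int i) (x i - y (\<sigma> i)) t) \<noteq> 0 \<longrightarrow>
          (\<exists>s<k. let a = (\<sigma> ^^ s) i1 in
              (\<forall>j<k. (\<sigma> ^^ j) a = a + j)
              \<and> y a = x a
              \<and> (\<forall>j\<in>{1..<k}. x (a + j) = x a - int j \<and> y (a + j) = x a - int j))))"
proof -
  have bounds: "int (\<sigma> i) - int i \<le> x i - y (\<sigma> i) \<and> x i - y (\<sigma> i) \<le> t"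
    if "0 \<le> t" "(\<Prod>i=1..N. F p (int (\<sigma> i) - int i) (x i - y (\<sigma> i)) t) \<noteq> 0" "i \<in> {1..N}" for i
    using F_prod_nonzero_imp_gap_bounds[OF h\<sigma> hx hy that] by blast
  have "(\<forall>i\<in>{1..N}. \<sigma> i = i) \<and> (\<forall>i\<in>{1..N}. x i = y i)"
    if "t = 0" and nonzero: "(\<Prod>i=1..N. F p (int (\<sigma> i) - int i) (x i - y (\<sigma> i)) t) \<noteq> 0"
  proof -
    have "\<sigma> = id"
      using bounds[OF _ nonzero] \<open>t = 0\<close> by (intro permutes_le_imp_id[OF h\<sigma>]) force+
    then show ?thesis
      using bounds[OF _ nonzero] \<open>t = 0\<close> by force
  qed
  moreover have "\<exists>s<k. let a = (\<sigma> ^^ s) i1 in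
              (\<forall>j<k. (\<sigma> ^^ j) a = a + j)
              \<and> y a = x a
              \<and> (\<forall>j\<in>{1..<k}. x (a + j) = x a - int j \<and> y (a + j) = x a - int j)"
    if "t = 1" and cycle: "i1 \<in> {1..N} \<and> k > 1 \<and> (\<sigma> ^^ k) i1 = i1 \<and> (\<forall>j\<in>{1..<k}. (\<sigma> ^^ j) i1 \<noteq> i1)"
      and nonzero: "(\<Prod>i=1..N. F p (int (\<sigma> i) - int i) (x i - y (\<sigma> i)) t) \<noteq> 0" for i1 k
  proof -
    have gaps: "int (\<sigma> i) - int i \<le> x i - y (\<sigma> i) \<and> x i - y (\<sigma> i) \<le> 1" if "i \<in> {1..N}" for i
      using bounds[OF _ nonzero that] \<open>t = 1\<close> by simp
    from cycle have c: "i1 \<in> {1..N}" "1 < k" "(\<sigma> ^^ k) i1 = i1" "\<And>j. j \<in> {1..<k} \<Longrightarrow> (\<sigma> ^^ j) i1 \<noteq> i1"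
      by auto
    show ?thesis
      using unit_gap_cycle_shape[OF h\<sigma> hx hy gaps c] .
  qed
  ultimately show ?thesis
    by blast
qed

end
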